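(* Let $X$ be a two-sided quaternionic Banach space, $\mathbb{B}=\{q\in\mathbb{H}:|q|<1\}$, and $T\in\mathcal{B}(X)$. Suppose that $\sigma_S(T)\cap\partial\mathbb{B}\subseteq\{1\}$, that every $s\in\mathbb{H}$ with $|s|>1$ lies in $\rho_S(T)$, and that there exist constants $C>0$ and $0<\alpha\le1$ such that $$\|S_L^{-2}(s,T)\|\le\frac{C}{|s-1|^{1+\alpha}}\quad\text{for all } s\in\mathbb{H}\text{ with }|s|>1.$$ Then $T$ is power-bounded, i.e. $\sup_{n\in\mathbb{N}}\|T^n\|<\infty$.
   Context: $\mathbb{N}$ is the set of positive integers. $\mathbb{H}$ denotes the real algebra of quaternions; for $s\in\mathbb{H}$, $\overline{s}$ is its conjugate, $\mathrm{Re}(s)$ its real part, $|s|$ its modulus. $X$ is a two-sided vector space over $\mathbb{H}$ which is a Banach space; $\mathcal{B}(X)$ is the algebra of bounded right $\mathbb{H}$-linear operators on $X$ with identity $\mathcal{I}$ and operator norm; $(sT)(v)=s(Tv)$, $(Ts)(v)=T(sv)$. For $s\in\mathbb{H}$ put $Q_s(T)=T^2-2\mathrm{Re}(s)T+|s|^2\mathcal{I}$; $\rho_S(T)=\{s\in\mathbb{H}: Q_s(T)\text{ invertible in }\mathcal{B}(X)\}$ and $\sigma_S(T)=\mathbb{H}\setminus\rho_S(T)$ (the $S$-spectrum). For $s\in\rho_S(T)$, $$S_L^{-2}(s,T)=Q_s(T)^{-2}\big(\overline{s}^{\,2}\mathcal{I}-2T\overline{s}+T^2\big).$$ *)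

theory Defs
  imports "HOL-Analysis.Analysis"
begin

datatype quat = Quat (qRe: real) (qi: real) (qj: real) (qk: real)

definition qof_real :: "real \<Rightarrow> quat" where
  "qof_real r = Quat r 0 0 0"

definition qadd :: "quat \<Rightarrow> quat \<Rightarrow> quat" where
  "qadd p q = Quat (qRe p + qRe q) (qi p + qi q) (qj p + qj q) (qk p + qk q)"

definition qsub :: "quat \<Rightarrow> quat \<Rightarrow> quat" where
  "qsub p q = Quat (qRe p - qRe q) (qi p - qi q) (qj p - qj q) (qk p - qk q)"

definition qmult :: "quat \<Rightarrow> quat \<Rightarrow> quat" where
  "qmult p q = Quat
     (qRe p * qRe q - qi p * qi q - qj p * qj q - qk p * qk q)
     (qRe p * qi q + qi p * qRe q + qj p * qk q - qk p * qj q)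
     (qRe p * qj q - qi p * qk q + qj p * qRe q + qk p * qi q)
     (qRe p * qk q + qi p * qj q - qj p * qi q + qk p * qRe q)"

definition qcnj :: "quat \<Rightarrow> quat" where
  "qcnj q = Quat (qRe q) (- qi q) (- qj q) (- qk q)"

definition qnorm :: "quat \<Rightarrow> real" where
  "qnorm q = sqrt ((qRe q)\<^sup>2 + (qi q)\<^sup>2 + (qj q)\<^sup>2 + (qk q)\<^sup>2)"

text \<open>X is a real Banach space (type class banach) equipped with a left
  action lm (s v = lm s v) and a right action rm (v s = rm v s) of the
  quaternions, making it a two-sided H-vector space whose norm satisfies
  norm (s v) = |s| norm v = norm (v s).\<close>

definition two_sided_qbanach ::
  "(quat \<Rightarrow> 'x::banach \<Rightarrow> 'x) \<Rightarrow> ('x \<Rightarrow> quat \<Rightarrow> 'x) \<Rightarrow> bool" where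
  "two_sided_qbanach lm rm \<longleftrightarrow>
     (\<forall>a b v. lm (qmult a b) v = lm a (lm b v)) \<and>
     (\<forall>a b v. rm v (qmult a b) = rm (rm v a) b) \<and>
     (\<forall>a b v. lm a (rm v b) = rm (lm a v) b) \<and>
     (\<forall>a v w. lm a (v + w) = lm a v + lm a w) \<and>
     (\<forall>a b v. lm (qadd a b) v = lm a v + lm b v) \<and>
     (\<forall>a v w. rm (v + w) a = rm v a + rm w a) \<and>
     (\<forall>a b v. rm v (qadd a b) = rm v a + rm v b) \<and>
     (\<forall>r v. lm (qof_real r) v = r *\<^sub>R v) \<and>
     (\<forall>r v. rm v (qof_real r) = r *\<^sub>R v) \<and>
     (\<forall>a v. norm (lm a v) = qnorm a * norm v) \<and>
     (\<forall>a v. norm (rm v a) = qnorm a * norm v)"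

definition qops :: "('x::banach \<Rightarrow> quat \<Rightarrow> 'x) \<Rightarrow> ('x \<Rightarrow> 'x) set" where
  "qops rm = {T. bounded_linear T \<and> (\<forall>v a. T (rm v a) = rm (T v) a)}"

definition qinvertible :: "('x::banach \<Rightarrow> quat \<Rightarrow> 'x) \<Rightarrow> ('x \<Rightarrow> 'x) \<Rightarrow> bool" where
  "qinvertible rm A \<longleftrightarrow> (\<exists>B \<in> qops rm. B \<circ> A = id \<and> A \<circ> B = id)"

definition Qop :: "quat \<Rightarrow> ('x::banach \<Rightarrow> 'x) \<Rightarrow> ('x \<Rightarrow> 'x)" where
  "Qop s T = (\<lambda>v. T (T v) - (2 * qRe s) *\<^sub>R T v + (qnorm s)\<^sup>2 *\<^sub>R v)"

definition S_resolvent_set :: "('x::banach \<Rightarrow> quat \<Rightarrow> 'x) \<Rightarrow> ('x \<Rightarrow> 'x) \<Rightarrow> quat set" where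
  "S_resolvent_set rm T = {s. qinvertible rm (Qop s T)}"

definition S_spectrum :: "('x::banach \<Rightarrow> quat \<Rightarrow> 'x) \<Rightarrow> ('x \<Rightarrow> 'x) \<Rightarrow> quat set" where
  "S_spectrum rm T = UNIV - S_resolvent_set rm T"

text \<open>S_L^{-2}(s,T) = Q_s(T)^{-2} (conj(s)^2 I - 2 T conj(s) + T^2), where
  (conj(s)^2 I) v = conj(s)^2 v and (T conj(s)) v = T (conj(s) v).\<close>
definition SL2 :: "(quat \<Rightarrow> 'x::banach \<Rightarrow> 'x) \<Rightarrow> quat \<Rightarrow> ('x \<Rightarrow> 'x) \<Rightarrow> ('x \<Rightarrow> 'x)" where
  "SL2 lm s T =
     (let Qi = inv (Qop s T);
          A = (\<lambda>v. lm (qmult (qcnj s) (qcnj s)) v - 2 *\<^sub>R T (lm (qcnj s) v) + T (T v))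
      in Qi \<circ> Qi \<circ> A)"

end

theory Submission
  imports Defs
begin

text \<open>Restricted to a complex slice \<open>\<complex>\<^sub>i \<subseteq> \<bbbH>\<close>, left multiplication gives an embedding
  \<open>l\<close> of \<open>\<complex>\<close> into the operators (not commuting with \<open>T\<close>), and \<open>R\<^sub>1 = S\<^sub>L\<^sup>-\<^sup>1(z,T)\<close>,
  \<open>R\<^sub>2 = S\<^sub>L\<^sup>-\<^sup>2(z,T)\<close> satisfy the left resolvent equations \<open>R\<^sub>1 l(z) - T R\<^sub>1 = 1\<close> and \<open>R\<^sub>2 l(z) - T R\<^sub>2 = R\<^sub>1\<close>.
  Cauchy integrals over \<open>|z| = r\<close> are replaced by averages over the \<open>N\<close> points
  \<open>z\<^sub>k = r e\<^sup>2\<^sup>\<pi>\<^sup>i\<^sup>k\<^sup>/\<^sup>N\<close>, for which telescoping gives exact identities up to powers \<open>T\<^sup>N/r\<^sup>N\<close>.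
  The first identity and a compactness argument show that the spectral radius of \<open>T\<close> is at most 1,
  so \<open>T\<^sup>N/r\<^sup>N\<close> is negligible for large \<open>N\<close>. The second one expresses \<open>(n+1) T\<^sup>n\<close> through
  \<open>S\<^sub>L\<^sup>-\<^sup>2\<close>; the resolvent bound, weakened to \<open>K/|z-1|\<^sup>2\<close>, and the discrete Poisson sum
  \<open>\<Sum>\<^sub>k 1/|z\<^sub>k-1|\<^sup>2 = N(r\<^sup>N+1)/((r\<^sup>N-1)(r\<^sup>2-1))\<close> at \<open>r = 1 + 1/(n+2)\<close> then give
  \<open>\<parallel>T\<^sup>n\<parallel> \<le> 72 C\<close>.\<close>

section \<open>Bounded operators as a normed algebra\<close>

text \<open>A copy of \<open>'a \<Rightarrow>\<^sub>L 'a\<close> with composition as multiplication, which \<open>\<Rightarrow>\<^sub>L\<close> itself lacks.\<close>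

typedef (overloaded) 'a endo = "UNIV :: ('a::real_normed_vector \<Rightarrow>\<^sub>L 'a) set" by simp

setup_lifting type_definition_endo

instantiation endo :: (real_normed_vector) real_normed_vector
begin
lift_definition norm_endo :: "'a endo \<Rightarrow> real" is norm .
lift_definition minus_endo :: "'a endo \<Rightarrow> 'a endo \<Rightarrow> 'a endo" is "(-)" .
lift_definition plus_endo :: "'a endo \<Rightarrow> 'a endo \<Rightarrow> 'a endo" is "(+)" .
lift_definition uminus_endo :: "'a endo \<Rightarrow> 'a endo" is "uminus" .
lift_definition zero_endo :: "'a endo" is "0" .
lift_definition scaleR_endo :: "real \<Rightarrow> 'a endo \<Rightarrow> 'a endo" is "scaleR" .
definition dist_endo :: "'a endo \<Rightarrow> 'a endo \<Rightarrow> real" where "dist_endo a b = norm (a - b)"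
definition uniformity_endo :: "('a endo \<times> 'a endo) filter"
  where "uniformity_endo = (INF e\<in>{0 <..}. principal {(x, y). dist x y < e})"
definition open_endo :: "'a endo set \<Rightarrow> bool"
  where "open_endo S = (\<forall>x\<in>S. \<forall>\<^sub>F (x', y) in uniformity. x' = x \<longrightarrow> y \<in> S)"
definition sgn_endo :: "'a endo \<Rightarrow> 'a endo" where "sgn_endo x = scaleR (inverse (norm x)) x"
instance
  by standard
    (unfold dist_endo_def open_endo_def sgn_endo_def uniformity_endo_def,
     (rule refl | (transfer, force simp: norm_triangle_ineq algebra_simps))+)
end

instantiation endo :: (real_normed_vector) "{ring, monoid_mult}"
begin
lift_definition times_endo :: "'a endo \<Rightarrow> 'a endo \<Rightarrow> 'a endo" is "(o\<^sub>L)" .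
lift_definition one_endo :: "'a endo" is "id_blinfun" .
instance
  by standard (transfer, rule blinfun_eqI, simp add: blinfun.bilinear_simps)+
end

instance endo :: (real_normed_vector) real_normed_algebra
  by standard
    ((transfer, rule blinfun_eqI, simp add: blinfun.bilinear_simps)+,
     transfer, rule norm_blinfun_compose)

lift_definition endo_apply :: "'a::real_normed_vector endo \<Rightarrow> 'a \<Rightarrow> 'a" is blinfun_apply .

lift_definition endo_of :: "('a::real_normed_vector \<Rightarrow> 'a) \<Rightarrow> 'a endo" is Blinfun .

lemma endo_apply_endo_of: "bounded_linear f \<Longrightarrow> endo_apply (endo_of f) = f"
  by transfer (simp add: bounded_linear_Blinfun_apply)

lemma endo_apply_inject: "endo_apply a = endo_apply b \<Longrightarrow> a = b"
  by transfer (simp add: blinfun_apply_inject)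

lemma endo_apply_times [simp]: "endo_apply (a * b) = endo_apply a \<circ> endo_apply b"
  by transfer (simp add: fun_eq_iff)

lemma endo_apply_plus [simp]: "endo_apply (a + b) = (\<lambda>v. endo_apply a v + endo_apply b v)"
  by transfer (simp add: fun_eq_iff blinfun.add_left)

lemma endo_apply_minus [simp]: "endo_apply (a - b) = (\<lambda>v. endo_apply a v - endo_apply b v)"
  by transfer (simp add: fun_eq_iff blinfun.diff_left)

lemma endo_apply_scaleR [simp]: "endo_apply (c *\<^sub>R a) = (\<lambda>v. c *\<^sub>R endo_apply a v)"
  by transfer (simp add: fun_eq_iff blinfun.scaleR_left)

lemma endo_apply_one [simp]: "endo_apply 1 = id"
  by transfer (simp add: fun_eq_iff)

lemma endo_apply_power [simp]: "endo_apply (a ^ n) = endo_apply a ^^ n"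
  by (induction n) simp_all

lemma norm_endo_eq_onorm: "norm a = onorm (endo_apply a)"
  by transfer (simp add: norm_blinfun.rep_eq)

lemma norm_one_endo_le: "norm (1 :: 'a::real_normed_vector endo) \<le> 1"
  by transfer (rule norm_blinfun_id_le)

section \<open>Normed algebras\<close>

lemma sum_powers_intertwining:
  fixes F G A T :: "'a::{ring, monoid_mult}"
  assumes "F * A - T * F = G"
  shows "(\<Sum>j<N. T^j * G * A^(N-1-j)) = F * A^N - T^N * F"
proof (induction N)
  case 0
  then show ?case by simp
next
  case (Suc N)
  have "(\<Sum>j<Suc N. T^j * G * A^(Suc N-1-j)) = (\<Sum>j<N. T^j * G * A^(N-1-j) * A) + T^N * G"
    by (auto simp: mult.assoc Suc_diff_Suc simp flip: power_Suc2 intro!: sum.cong)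
  also have "\<dots> = (F * A^N - T^N * F) * A + T^N * (F * A - T * F)"
    by (simp only: sum_distrib_right[symmetric] Suc.IH assms)
  also have "\<dots> = F * A^Suc N - T^Suc N * F"
    unfolding power_Suc2 by (simp add: algebra_simps)
  finally show ?case .
qed

lemma scaled_one_minus_power_mult:
  fixes F G A T :: "'a::{real_algebra, monoid_mult}"
  assumes "F * A - T * F = G" "A ^ N = c *\<^sub>R 1"
  shows "(c *\<^sub>R 1 - T ^ N) * F = (\<Sum>j<N. T^j * G * A^(N-1-j))"
  using sum_powers_intertwining[OF assms(1), of N] assms(2) by (simp add: algebra_simps)

lemma conjugate_pair_intertwining:
  fixes a b T :: "'a::{real_algebra, monoid_mult}"
  assumes "a * b = q *\<^sub>R 1" "a + b = p *\<^sub>R 1"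
  shows "(a - T) * b - T * (a - T) = T * T - p *\<^sub>R T + q *\<^sub>R 1"
proof -
  have "T * b = p *\<^sub>R T - T * a"
    using arg_cong[OF assms(2), of "(*) T"] by (simp add: algebra_simps)
  then show ?thesis
    using assms(1) by (simp add: algebra_simps)
qed

lemma conjugate_pair_intertwining_square:
  fixes a b T :: "'a::{real_algebra, monoid_mult}"
  assumes "a * b = q *\<^sub>R 1" "a + b = p *\<^sub>R 1"
  shows "(a * a - 2 *\<^sub>R (T * a) + T * T) * b - T * (a * a - 2 *\<^sub>R (T * a) + T * T)
    = (T * T - p *\<^sub>R T + q *\<^sub>R 1) * (a - T)"
proof -
  have b: "b = p *\<^sub>R 1 - a"
    using assms(2) by (simp add: algebra_simps)
  have r1: "a * (a * b) = q *\<^sub>R a" and r2: "T * (a * b) = q *\<^sub>R T"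
    using assms(1) by (simp_all flip: mult.assoc)
  have r3: "T * (T * b) = p *\<^sub>R (T * T) - T * (T * a)"
    by (simp add: b algebra_simps)
  have r4: "T * (a * a) = p *\<^sub>R (T * a) - q *\<^sub>R T"
  proof -
    have "a * a = p *\<^sub>R a - q *\<^sub>R 1"
      using assms by (simp add: b algebra_simps)
    then show ?thesis by (simp add: right_diff_distrib)
  qed
  show ?thesis
    by (simp add: algebra_simps r1 r2 r3 r4 scaleR_2)
qed

lemma commuting_factor_intertwining:
  fixes P X T b :: "'a::ring"
  assumes "T * P = P * T"
  shows "P * X * b - T * (P * X) = P * (X * b - T * X)"
  by (metis assms mult.assoc right_diff_distrib)

lemma norm_power_le_const_mult_power:
  fixes x :: "'a::{real_normed_algebra, monoid_mult}"
  assumes "norm (x ^ M) \<le> t ^ M" "M > 0" "t > 0"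
  shows "\<exists>c. \<forall>n. norm (x ^ n) \<le> c * t ^ n"
proof
  define c where "c = (\<Sum>j<M. norm (x ^ j) / t ^ j)"
  show "\<forall>n. norm (x ^ n) \<le> c * t ^ n"
  proof
    fix n show "norm (x ^ n) \<le> c * t ^ n"
    proof (induction n rule: less_induct)
      case (less n)
      show ?case
      proof (cases "n < M")
        case True
        have "norm (x ^ n) / t ^ n \<le> c"
          unfolding c_def by (rule member_le_sum) (use True \<open>t > 0\<close> in auto)
        then show ?thesis
          using \<open>t > 0\<close> by (simp add: field_simps)
      next
        case False
        then have "x ^ n = x ^ M * x ^ (n - M)"
          by (simp flip: power_add)
        then have "norm (x ^ n) \<le> norm (x ^ M) * norm (x ^ (n - M))"
          by (simp add: norm_mult_ineq)
        also have "\<dots> \<le> t ^ M * (c * t ^ (n - M))"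
          using assms less[of "n - M"] False by (intro mult_mono) auto
        also have "\<dots> = c * t ^ n"
          using False by (simp add: mult_ac flip: power_add)
        finally show ?thesis .
      qed
    qed
  qed
qed

lemma norm_power_le_mult_power_mono:
  fixes x :: "'a::{real_normed_algebra, monoid_mult}"
  assumes "\<And>N. norm (x ^ N) \<le> c * t ^ N" "0 \<le> t" "t \<le> t'"
  shows "norm (x ^ N) \<le> c * t' ^ N"
proof -
  have "0 \<le> c"
    using assms(1)[of 0] norm_ge_zero[of "1::'a"] by (simp del: norm_ge_zero)
  then have "c * t ^ N \<le> c * t' ^ N"
    using assms(2,3) by (intro mult_left_mono power_mono)
  then show ?thesis
    using assms(1)[of N] by linarith
qed

lemma scaled_powers_tendsto_zero:
  fixes x :: "'a::{real_normed_algebra, monoid_mult}"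
  assumes "\<And>N. norm (x ^ N) \<le> c * g ^ N" "0 < g" "g < t"
  shows "(\<lambda>N. (1 / t ^ N) *\<^sub>R x ^ N) \<longlonglongrightarrow> 0"
proof (rule Lim_null_comparison)
  show "\<forall>\<^sub>F N in sequentially. norm ((1 / t ^ N) *\<^sub>R x ^ N) \<le> c * (g / t) ^ N"
    using assms by (simp add: power_divide divide_right_mono)
  show "(\<lambda>N. c * (g / t) ^ N) \<longlonglongrightarrow> 0"
    using assms by (intro tendsto_mult_right_zero LIMSEQ_power_zero) simp
qed

lemma smaller_growth_rate_if_scaled_powers_tendsto_zero:
  fixes x :: "'a::{real_normed_algebra, monoid_mult}"
  assumes "(\<lambda>N. (1 / s ^ N) *\<^sub>R x ^ N) \<longlonglongrightarrow> 0" "1 < s"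
  obtains t c where "1 < t" "t < s" "\<And>N. norm (x ^ N) \<le> c * t ^ N"
proof -
  have "\<forall>\<^sub>F N in sequentially. norm ((1 / s ^ N) *\<^sub>R x ^ N) < 1"
    using order_tendstoD(2)[OF tendsto_norm_zero[OF assms(1)]] by simp
  with eventually_gt_at_top[of 0]
  have "\<forall>\<^sub>F N in sequentially. 0 < N \<and> norm ((1 / s ^ N) *\<^sub>R x ^ N) < 1"
    by eventually_elim simp
  then obtain M where M: "0 < M" "norm (x ^ M) < s ^ M"
    using assms(2) by (auto simp: eventually_sequentially field_simps)
  define t where "t = max (root M (norm (x ^ M))) ((1 + s) / 2)"
  have "root M (norm (x ^ M)) < root M (s ^ M)"
    using M by (simp add: real_root_less_iff)
  then have "t < s" "1 < t"
    using M(1) assms(2) by (auto simp: t_def less_max_iff_disj real_root_power_cancel)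
  have "norm (x ^ M) = root M (norm (x ^ M)) ^ M"
    using M(1) by (simp add: real_root_pow_pos2)
  also have "\<dots> \<le> t ^ M"
    by (rule power_mono) (simp_all add: t_def real_root_ge_zero)
  finally obtain c where "\<And>N. norm (x ^ N) \<le> c * t ^ N"
    using norm_power_le_const_mult_power[of x M t] M(1) \<open>1 < t\<close> by auto
  with \<open>1 < t\<close> \<open>t < s\<close> show ?thesis
    using that by blast
qed

lemma norm_diff_inverse_le:
  fixes P P' Q Q' :: "'r::{real_normed_algebra, monoid_mult}"
  assumes "P' * Q' = 1" "Q * P = 1" "norm (Q' - Q) * norm P \<le> 1 / 2"
  shows "norm (P' - P) \<le> 2 * norm P * norm P * norm (Q' - Q)"
proof -
  have "P' - P = P' * (Q - Q') * P"
    using assms(1,2) by (simp add: algebra_simps mult.assoc)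
  then have "norm (P' - P) \<le> norm (P' * (Q - Q')) * norm P"
    by (simp add: norm_mult_ineq)
  also have "\<dots> \<le> norm P' * norm (Q' - Q) * norm P"
    using norm_mult_ineq[of P' "Q - Q'"] by (intro mult_right_mono) (simp_all add: norm_minus_commute)
  finally have diff: "norm (P' - P) \<le> norm P' * (norm (Q' - Q) * norm P)"
    by (simp add: mult.assoc)
  have "norm P' \<le> norm P + norm (P' - P)"
    by (metis add.commute diff_add_cancel norm_triangle_ineq)
  also have "\<dots> \<le> norm P + norm P' * (1 / 2)"
    using diff mult_left_mono[OF assms(3), of "norm P'"] by simp
  finally have "norm P' \<le> 2 * norm P"
    by simp
  then have "norm P' * (norm (Q' - Q) * norm P) \<le> 2 * norm P * (norm (Q' - Q) * norm P)"
    by (intro mult_right_mono) simp_all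
  with diff show ?thesis
    by (simp add: mult_ac)
qed

lemma continuous_on_two_sided_inverse:
  fixes Q P :: "'a::topological_space \<Rightarrow> 'r::{real_normed_algebra, monoid_mult}"
  assumes Q: "continuous_on S Q"
    and left: "\<And>z. z \<in> S \<Longrightarrow> P z * Q z = 1"
    and right: "\<And>z. z \<in> S \<Longrightarrow> Q z * P z = 1"
  shows "continuous_on S P"
  unfolding continuous_on_def
proof
  fix z assume z: "z \<in> S"
  have Q_lim: "((\<lambda>w. norm (Q w - Q z)) \<longlongrightarrow> 0) (at z within S)"
    using Q z by (simp add: continuous_on_def LIM_zero tendsto_norm_zero)
  have "\<forall>\<^sub>F w in at z within S. norm (Q w - Q z) * norm (P z) < 1 / 2"
    using tendsto_mult_left_zero[OF Q_lim] by (rule order_tendstoD) simp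
  moreover have "\<forall>\<^sub>F w in at z within S. w \<in> S"
    by (simp add: eventually_at_filter)
  ultimately have "\<forall>\<^sub>F w in at z within S. norm (P w - P z) \<le> 2 * norm (P z) * norm (P z) * norm (Q w - Q z)"
    by eventually_elim (simp add: norm_diff_inverse_le left right z)
  moreover have "((\<lambda>w. 2 * norm (P z) * norm (P z) * norm (Q w - Q z)) \<longlongrightarrow> 0) (at z within S)"
    using tendsto_mult_right_zero[OF Q_lim] by simp
  ultimately have "((\<lambda>w. P w - P z) \<longlongrightarrow> 0) (at z within S)"
    by (rule Lim_null_comparison)
  then show "(P \<longlongrightarrow> P z) (at z within S)"
    by (rule LIM_zero_cancel)
qed

lemma norm_average_le:
  fixes x :: "nat \<Rightarrow> 'a::real_normed_vector"
  assumes "\<And>k. k < N \<Longrightarrow> norm (x k) \<le> \<epsilon>" "0 \<le> \<epsilon>"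
  shows "norm ((1 / real N) *\<^sub>R (\<Sum>k<N. x k)) \<le> \<epsilon>"
proof (cases "N = 0")
  case False
  have "norm (\<Sum>k<N. x k) \<le> (\<Sum>k<N. \<epsilon>)"
    using assms(1) by (intro order_trans[OF norm_sum] sum_mono) simp
  then show ?thesis
    using False by (simp add: field_simps)
qed (simp add: assms(2))

lemma norm_le_if_right_inverse_near_one:
  fixes W S :: "'r::{real_normed_algebra, monoid_mult}"
  assumes "(1 - W) * S = 1" "norm (S - 1) \<le> 1 / 2"
  shows "norm W \<le> 2 * norm (S - 1)"
proof -
  have "W = (S - 1) + W * (1 - S)"
    using assms(1) by (simp add: algebra_simps)
  then have "norm W \<le> norm (S - 1) + norm W * norm (S - 1)"
    by (metis norm_triangle_le norm_mult_ineq norm_minus_commute add_left_mono)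
  also have "\<dots> \<le> norm (S - 1) + norm W * (1 / 2)"
    using mult_left_mono[OF assms(2), of "norm W"] by simp
  finally show ?thesis by simp
qed

lemma tendsto_zero_if_right_inverse_tendsto_one:
  fixes W S :: "'i \<Rightarrow> 'r::{real_normed_algebra, monoid_mult}"
  assumes "\<forall>\<^sub>F N in F. (1 - W N) * S N = 1" "(S \<longlongrightarrow> 1) F"
  shows "(W \<longlongrightarrow> 0) F"
proof -
  have S_lim: "((\<lambda>N. S N - 1) \<longlongrightarrow> 0) F"
    using assms(2) by (rule LIM_zero)
  have "\<forall>\<^sub>F N in F. norm (S N - 1) < 1 / 2"
    using tendstoD[OF S_lim, of "1 / 2"] by simp
  with assms(1) have "\<forall>\<^sub>F N in F. norm (W N) \<le> 2 * norm (S N - 1)"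
    by eventually_elim (simp add: norm_le_if_right_inverse_near_one)
  moreover have "((\<lambda>N. 2 * norm (S N - 1)) \<longlongrightarrow> 0) F"
    using tendsto_mult_right_zero[OF tendsto_norm_zero[OF S_lim]] by simp
  ultimately show ?thesis
    by (rule Lim_null_comparison)
qed

lemma tendsto_one_if_bounded_right_inverse:
  fixes W S :: "'i \<Rightarrow> 'r::{real_normed_algebra, monoid_mult}"
  assumes "\<forall>\<^sub>F N in F. (1 - W N) * S N = 1" "(W \<longlongrightarrow> 0) F" "\<forall>\<^sub>F N in F. norm (S N) \<le> K"
  shows "(S \<longlongrightarrow> 1) F"
proof -
  have "\<forall>\<^sub>F N in F. norm (S N - 1) \<le> norm (W N) * K"
    using assms(1,3)
  proof eventually_elim
    case (elim N)
    then have "S N - 1 = W N * S N"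
      by (simp add: algebra_simps)
    then show ?case
      using elim norm_mult_ineq[of "W N" "S N"] by (simp add: order_trans mult_left_mono)
  qed
  moreover have "((\<lambda>N. norm (W N) * K) \<longlongrightarrow> 0) F"
    using tendsto_mult_left_zero[OF tendsto_norm_zero[OF assms(2)]] by simp
  ultimately have "((\<lambda>N. S N - 1) \<longlongrightarrow> 0) F"
    by (rule Lim_null_comparison)
  then show ?thesis
    by (rule LIM_zero_cancel)
qed

lemma tendsto_if_uniformly_approximable:
  fixes f :: "'i \<Rightarrow> 'a::metric_space"
  assumes "\<And>\<epsilon>. \<epsilon> > 0 \<Longrightarrow> \<exists>g. (g \<longlongrightarrow> L) F \<and> (\<forall>\<^sub>F N in F. dist (f N) (g N) \<le> \<epsilon>)"
  shows "(f \<longlongrightarrow> L) F"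
proof (rule tendstoI)
  fix e :: real assume "e > 0"
  then obtain g where g: "(g \<longlongrightarrow> L) F" "\<forall>\<^sub>F N in F. dist (f N) (g N) \<le> e / 2"
    using assms[of "e / 2"] by auto
  have "\<forall>\<^sub>F N in F. dist (g N) L < e / 2"
    using tendstoD[OF g(1), of "e / 2"] \<open>e > 0\<close> by simp
  with g(2) show "\<forall>\<^sub>F N in F. dist (f N) L < e"
  proof eventually_elim
    case (elim N)
    then show ?case
      using dist_triangle[of "f N" L "g N"] by linarith
  qed
qed

lemma norm_le_of_perturbed_identity:
  fixes W S x :: "'r::{real_normed_algebra, monoid_mult}"
  assumes "norm (1::'r) \<le> 1" "(1 - W) * (1 - W) * S = a *\<^sub>R x + b *\<^sub>R (W * x)"
    and "norm W \<le> 1" "\<bar>b\<bar> * norm W \<le> c"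
  shows "(a - c) * norm x \<le> 4 * norm S"
proof -
  have one_minus_W: "norm (1 - W) \<le> 2"
    using norm_triangle_ineq4[of 1 W] assms(1,3) by simp
  have "a * norm x \<le> norm (a *\<^sub>R x)"
    using abs_ge_self[of a] by (simp add: mult_right_mono)
  also have "\<dots> \<le> norm ((1 - W) * (1 - W) * S) + norm (b *\<^sub>R (W * x))"
    using assms(2) norm_triangle_ineq4 by (metis add_diff_cancel_right')
  also have "norm ((1 - W) * (1 - W) * S) \<le> norm (1 - W) * norm (1 - W) * norm S"
    by (meson norm_mult_ineq order_trans mult_right_mono norm_ge_zero)
  also have "\<dots> \<le> 2 * 2 * norm S"
    using one_minus_W by (intro mult_mono) auto
  also have "norm (b *\<^sub>R (W * x)) \<le> \<bar>b\<bar> * (norm W * norm x)"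
    by (simp add: norm_mult_ineq mult_left_mono)
  also have "\<dots> \<le> c * norm x"
    using assms(4) by (simp add: mult_right_mono flip: mult.assoc)
  finally show ?thesis
    by (simp add: algebra_simps)
qed

lemma power2_le_mult_powr:
  fixes x b \<alpha> :: real
  assumes "0 < x" "x \<le> b" "1 \<le> b" "0 \<le> \<alpha>" "\<alpha> \<le> 1"
  shows "x\<^sup>2 \<le> b * x powr (1 + \<alpha>)"
proof -
  have "x powr (1 - \<alpha>) \<le> b powr (1 - \<alpha>)"
    using assms by (intro powr_mono2) auto
  also have "\<dots> \<le> b powr 1"
    using assms by (intro powr_mono) auto
  finally have "x powr (1 - \<alpha>) \<le> b"
    using assms by simp
  moreover have "x\<^sup>2 = x powr (1 + \<alpha>) * x powr (1 - \<alpha>)"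
    using assms(1) by (simp add: powr_numeral flip: powr_add)
  ultimately show ?thesis
    using mult_right_mono[of "x powr (1 - \<alpha>)" b "x powr (1 + \<alpha>)"] by (simp add: mult.commute)
qed

lemma one_plus_inverse_power_le_3: "(1 + 1 / real m) ^ m \<le> 3"
proof -
  have "(1 + 1 / real m) ^ m \<le> exp (1 / real m) ^ m"
    by (rule power_mono) auto
  also have "\<dots> \<le> exp 1"
    by (cases "m = 0") (simp_all flip: exp_of_nat_mult)
  also have "\<dots> \<le> 3"
    by (rule exp_le)
  finally show ?thesis .
qed

section \<open>Equally spaced points on a circle\<close>

definition circle_node :: "real \<Rightarrow> nat \<Rightarrow> nat \<Rightarrow> complex" where
  "circle_node r N k = of_real r * cis (2 * pi * real k / real N)"

lemma norm_circle_node [simp]: "r \<ge> 0 \<Longrightarrow> cmod (circle_node r N k) = r"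
  by (simp add: circle_node_def norm_mult)

lemma circle_node_neq_one: "r > 1 \<Longrightarrow> circle_node r N k \<noteq> 1"
  by (metis less_irrefl less_imp_le norm_circle_node norm_one zero_less_one order.strict_trans)

lemma dist_circle_nodes: "dist (circle_node u N k) (circle_node v N k) = \<bar>u - v\<bar>"
  by (simp add: circle_node_def dist_norm norm_mult flip: left_diff_distrib of_real_diff)

lemma compact_annulus: "compact {z::complex. a \<le> cmod z \<and> cmod z \<le> b}"
proof -
  have eq: "{z::complex. a \<le> cmod z \<and> cmod z \<le> b} = cball 0 b \<inter> {z. a \<le> cmod z}"
    by auto
  show ?thesis
    unfolding eq by (intro compact_Int_closed compact_cball closed_Collect_le continuous_intros)
qed

lemma circle_node_power:
  "circle_node r N k ^ m = of_real (r ^ m) * cis (2 * pi * real m / real N) ^ k"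
proof -
  have "cis (2 * pi * real k / real N) ^ m = cis (2 * pi * real m / real N) ^ k"
    unfolding Complex.DeMoivre by (rule arg_cong[where f = cis]) (simp add: field_simps)
  then show ?thesis
    by (simp add: circle_node_def power_mult_distrib)
qed

lemma cis_2pi_fraction_eq_1_iff:
  assumes "N > 0"
  shows "cis (2 * pi * real m / real N) = 1 \<longleftrightarrow> N dvd m"
proof -
  have "cis (2 * pi * real m / real N) = 1
      \<longleftrightarrow> (\<exists>n::int. 2 * pi * real m / real N = of_int (2 * n) * pi)"
    by (simp add: cis_conv_exp exp_eq_1)
  also have "\<dots> \<longleftrightarrow> (\<exists>n::int. real m = of_int n * real N)"
    using assms by (auto simp: field_simps)
  also have "\<dots> \<longleftrightarrow> (\<exists>n::int. int m = n * int N)"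
    by (metis of_int_eq_iff of_int_mult of_int_of_nat_eq)
  also have "\<dots> \<longleftrightarrow> N dvd m"
    by (metis dvd_def int_dvd_int_iff mult.commute)
  finally show ?thesis .
qed

lemma sum_circle_node_power:
  assumes "N > 0"
  shows "(\<Sum>k<N. circle_node r N k ^ m) = (if N dvd m then of_nat N * of_real (r ^ m) else 0)"
proof -
  define \<omega> where "\<omega> = cis (2 * pi * real m / real N)"
  have "real N * (2 * pi * real m / real N) = 2 * pi * real m"
    using assms by simp
  then have "\<omega> ^ N = 1"
    unfolding \<omega>_def Complex.DeMoivre by simp
  moreover have "\<omega> = 1 \<longleftrightarrow> N dvd m"
    unfolding \<omega>_def by (rule cis_2pi_fraction_eq_1_iff[OF assms])
  ultimately show ?thesis
    by (simp add: circle_node_power sum_gp_strict flip: \<omega>_def sum_distrib_left)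
qed

lemma circle_node_power_self: "N > 0 \<Longrightarrow> circle_node r N k ^ N = of_real (r ^ N)"
  by (simp add: circle_node_power)

lemma dvd_strictly_between:
  fixes N m a :: nat
  assumes "N * a < m" "m < N * (a + 2)" "N dvd m"
  shows "m = N * (a + 1)"
proof -
  obtain q where q: "m = N * q"
    using assms(3) by blast
  have "a < q" "q < a + 2"
    using assms(1,2) q by (metis mult_less_cancel1)+
  then have "q = a + 1"
    by simp
  then show ?thesis
    using q by simp
qed

lemma dvd_window_iff:
  fixes N n i j :: nat
  assumes "j < N" "n < N" "i < N"
  shows "N dvd (2*N+n-j-i) \<longleftrightarrow> i = (if j \<le> n then n - j else N + n - j)"
proof
  assume dvd: "N dvd (2*N+n-j-i)"
  show "i = (if j \<le> n then n - j else N + n - j)"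
  proof (cases "j \<le> n")
    case True
    have "2*N+n-j-i = N * (1 + 1)"
      by (rule dvd_strictly_between) (use True assms dvd in auto)
    then show ?thesis using True assms by auto
  next
    case False
    have "2*N+n-j-i = N * (0 + 1)"
      by (rule dvd_strictly_between) (use False assms dvd in auto)
    then show ?thesis using False assms by auto
  qed
qed (use assms in \<open>cases "j \<le> n"; auto\<close>)

lemma sum_if_dvd_single_term:
  fixes f :: "nat \<Rightarrow> nat \<Rightarrow> 'a::comm_monoid_add"
  assumes "j < N" "n < N"
  shows "(\<Sum>i<N. if N dvd (2*N+n-j-i) then f (j+i) (2*N+n-j-i) else 0)
       = (if j \<le> n then f n (2*N) else f (n+N) N)"
proof -
  define i0 where "i0 = (if j \<le> n then n - j else N + n - j)"
  have "i0 < N"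
    using assms by (auto simp: i0_def)
  have "(\<Sum>i<N. if N dvd (2*N+n-j-i) then f (j+i) (2*N+n-j-i) else 0)
      = (\<Sum>i<N. if i = i0 then f (j+i) (2*N+n-j-i) else 0)"
  proof (intro sum.cong refl)
    fix i assume "i \<in> {..<N}"
    then show "(if N dvd (2*N+n-j-i) then f (j+i) (2*N+n-j-i) else 0)
        = (if i = i0 then f (j+i) (2*N+n-j-i) else 0)"
      using dvd_window_iff[OF assms, of i] by (simp add: i0_def)
  qed
  also have "\<dots> = f (j+i0) (2*N+n-j-i0)"
    using \<open>i0 < N\<close> by simp
  also have "\<dots> = (if j \<le> n then f n (2*N) else f (n+N) N)"
    using assms by (auto simp: i0_def add.commute)
  finally show ?thesis .
qed

lemma sum_if_le_split:
  fixes A B :: "'a::real_vector"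
  assumes "n < N"
  shows "(\<Sum>j<N. if j \<le> n then A else B) = real (n+1) *\<^sub>R A + real (N-1-n) *\<^sub>R B"
proof -
  have split: "{..<N} = {..n} \<union> {n<..<N}"
    using assms by auto
  have "(\<Sum>j<N. if j \<le> n then A else B)
      = (\<Sum>j\<le>n. if j \<le> n then A else B) + (\<Sum>j\<in>{n<..<N}. if j \<le> n then A else B)"
    unfolding split by (rule sum.union_disjoint) auto
  also have "\<dots> = (\<Sum>j\<le>n. A) + (\<Sum>j\<in>{n<..<N}. B)"
    by simp
  finally show ?thesis
    by (simp add: sum_constant_scaleR)
qed

lemma double_sum_if_dvd:
  fixes f :: "nat \<Rightarrow> nat \<Rightarrow> 'a::real_vector"
  assumes "n < N"
  shows "(\<Sum>j<N. \<Sum>i<N. if N dvd (2*N+n-j-i) then f (j+i) (2*N+n-j-i) else 0)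
    = real (n+1) *\<^sub>R f n (2*N) + real (N-1-n) *\<^sub>R f (n+N) N"
proof -
  have "(\<Sum>j<N. \<Sum>i<N. if N dvd (2*N+n-j-i) then f (j+i) (2*N+n-j-i) else 0)
      = (\<Sum>j<N. if j \<le> n then f n (2*N) else f (n+N) N)"
  proof (intro sum.cong refl)
    fix j assume "j \<in> {..<N}"
    then show "(\<Sum>i<N. if N dvd (2*N+n-j-i) then f (j+i) (2*N+n-j-i) else 0)
      = (if j \<le> n then f n (2*N) else f (n+N) N)"
      using sum_if_dvd_single_term[OF _ assms, of j f] by simp
  qed
  also have "\<dots> = real (n+1) *\<^sub>R f n (2*N) + real (N-1-n) *\<^sub>R f (n+N) N"
    using assms by (rule sum_if_le_split)
  finally show ?thesis .
qed

lemma Re_cayley: "Re ((z + 1) / (z - 1)) = ((cmod z)\<^sup>2 - 1) / (cmod (z - 1))\<^sup>2"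
proof -
  have "cmod z * cmod z = Re z * Re z + Im z * Im z"
    by (metis cmod_power2 power2_eq_square)
  then have "(Re z + 1) * (Re z - 1) + Im z * Im z = (cmod z)\<^sup>2 - 1"
    by (simp add: power2_eq_square algebra_simps)
  then show ?thesis
    by (simp add: Re_divide')
qed

lemma sum_inverse_circle_nodes_minus_one:
  assumes "r > 1" "N > 0"
  shows "(\<Sum>k<N. 1 / (circle_node r N k - 1)) = of_real (real N / (r ^ N - 1))"
proof -
  have "r ^ N > 1"
    using assms by (simp add: one_less_power)
  then have denom: "(of_real r ^ N - 1 :: complex) \<noteq> 0"
    by (metis less_irrefl of_real_1 of_real_eq_iff of_real_power right_minus_eq)
  have "1 / (circle_node r N k - 1) = (\<Sum>i<N. circle_node r N k ^ i) / (of_real r ^ N - 1)" for k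
  proof -
    have "circle_node r N k \<noteq> 1"
      using assms(1) by (rule circle_node_neq_one)
    moreover have "circle_node r N k ^ N - 1 = (circle_node r N k - 1) * (\<Sum>i<N. circle_node r N k ^ i)"
      by (rule power_diff_1_eq)
    ultimately show ?thesis
      using denom assms(2) by (simp add: circle_node_power_self field_simps)
  qed
  then have "(\<Sum>k<N. 1 / (circle_node r N k - 1))
      = (\<Sum>k<N. \<Sum>i<N. circle_node r N k ^ i) / (of_real r ^ N - 1)"
    by (simp add: sum_divide_distrib)
  also have "\<dots> = (\<Sum>i<N. \<Sum>k<N. circle_node r N k ^ i) / (of_real r ^ N - 1)"
    by (subst sum.swap) (rule refl)
  also have "(\<Sum>i<N. \<Sum>k<N. circle_node r N k ^ i) = (\<Sum>i<N. if i = 0 then of_nat N else 0)"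
    using assms(2) by (intro sum.cong refl) (auto simp: sum_circle_node_power dest: dvd_imp_le)
  finally show ?thesis
    using assms(2) by simp
qed

lemma sum_inverse_dist_circle_nodes_one:
  assumes "r > 1" "N > 0"
  shows "(\<Sum>k<N. 1 / (cmod (circle_node r N k - 1))\<^sup>2) = real N * (r ^ N + 1) / ((r ^ N - 1) * (r\<^sup>2 - 1))"
    (is "?S = _")
proof -
  have "r ^ N > 1" "r\<^sup>2 > 1"
    using assms by (simp_all add: one_less_power)
  have "(r\<^sup>2 - 1) * ?S = Re (\<Sum>k<N. (circle_node r N k + 1) / (circle_node r N k - 1))"
    using assms by (simp add: Re_cayley sum_distrib_left)
  also have "(\<Sum>k<N. (circle_node r N k + 1) / (circle_node r N k - 1))
      = (\<Sum>k<N. 1 + 2 * (1 / (circle_node r N k - 1)))"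
    using circle_node_neq_one[OF assms(1)] by (intro sum.cong refl) (simp add: field_simps)
  also have "\<dots> = of_nat N + 2 * of_real (real N / (r ^ N - 1))"
    by (simp only: sum.distrib sum_distrib_left[symmetric] sum_inverse_circle_nodes_minus_one[OF assms])
      simp
  also have "Re \<dots> = real N * (r ^ N + 1) / (r ^ N - 1)"
    using \<open>r ^ N > 1\<close> by (simp add: field_simps)
  finally have "(r\<^sup>2 - 1) * ?S = real N * (r ^ N + 1) / (r ^ N - 1)" .
  then have "?S = real N * (r ^ N + 1) / (r ^ N - 1) / (r\<^sup>2 - 1)"
    using \<open>r\<^sup>2 > 1\<close> by (metis less_irrefl right_minus_eq nonzero_mult_div_cancel_left)
  then show ?thesis
    by simp
qed

section \<open>The S-resolvent on a complex slice\<close>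

definition Q_slice :: "'r::{real_normed_algebra, monoid_mult} \<Rightarrow> complex \<Rightarrow> 'r" where
  "Q_slice T z = T * T - (2 * Re z) *\<^sub>R T + (cmod z)\<^sup>2 *\<^sub>R 1"

text \<open>\<open>l z\<close> is left multiplication by \<open>z\<close> in a complex slice of \<open>\<bbbH>\<close>,
  \<open>Qinv z\<close> is \<open>Q\<^sub>z(T)\<^sup>-\<^sup>1\<close>, and \<open>R1\<close>, \<open>R2\<close> below are \<open>S\<^sub>L\<^sup>-\<^sup>1(z,T)\<close>, \<open>S\<^sub>L\<^sup>-\<^sup>2(z,T)\<close>.
  Only \<open>norm 1 \<le> 1\<close> is assumed, because the operators on the zero space have \<open>1 = 0\<close>.\<close>

locale slice_resolvent =
  fixes T :: "'r::{real_normed_algebra, monoid_mult}"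
    and l :: "complex \<Rightarrow> 'r"
    and Qinv :: "complex \<Rightarrow> 'r"
  assumes norm_one_le: "norm (1::'r) \<le> 1"
    and l_mult: "l (z * w) = l z * l w"
    and l_add: "l (z + w) = l z + l w"
    and l_of_real: "l (of_real c) = c *\<^sub>R 1"
    and norm_l_le: "norm (l z) \<le> cmod z"
    and Qinv_left: "1 < cmod z \<Longrightarrow> Qinv z * Q_slice T z = 1"
    and Qinv_right: "1 < cmod z \<Longrightarrow> Q_slice T z * Qinv z = 1"
begin

definition R1 :: "complex \<Rightarrow> 'r" where
  "R1 z = Qinv z * (l (cnj z) - T)"

definition R2 :: "complex \<Rightarrow> 'r" where
  "R2 z = Qinv z * Qinv z * (l (cnj z * cnj z) - 2 *\<^sub>R (T * l (cnj z)) + T * T)"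

lemma l_zero [simp]: "l 0 = 0"
  using l_of_real[of 0] by simp

lemma l_one [simp]: "l 1 = 1"
  using l_of_real[of 1] by simp

lemma l_sum: "l (sum f A) = (\<Sum>k\<in>A. l (f k))"
  by (induction A rule: infinite_finite_induct) (auto simp: l_add)

lemma l_power: "l (z ^ n) = l z ^ n"
  by (induction n) (auto simp: l_mult)

lemma l_of_nat_mult_of_real: "l (of_nat N * of_real c) = (real N * c) *\<^sub>R 1"
  by (metis l_of_real of_real_mult of_real_of_nat_eq)

lemma bounded_linear_l: "bounded_linear l"
proof
  show "l (c *\<^sub>R z) = c *\<^sub>R l z" for c z
    by (simp add: scaleR_conv_of_real l_mult l_of_real)
  show "\<exists>K. \<forall>z. norm (l z) \<le> norm z * K"
    using norm_l_le by (intro exI[of _ 1]) simp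
qed (rule l_add)

lemma l_cnj_mult: "l (cnj z) * l z = (cmod z)\<^sup>2 *\<^sub>R 1"
  by (metis l_mult l_of_real complex_norm_square of_real_power mult.commute)

lemma l_cnj_plus: "l (cnj z) + l z = (2 * Re z) *\<^sub>R 1"
  by (metis l_add l_of_real complex_add_cnj add.commute)

lemma T_Q_commute: "T * Q_slice T z = Q_slice T z * T"
  by (simp add: Q_slice_def algebra_simps)

lemma T_Qinv_commute:
  assumes "1 < cmod z"
  shows "T * Qinv z = Qinv z * T"
proof -
  have "Qinv z * T = Qinv z * T * (Q_slice T z * Qinv z)"
    using Qinv_right[OF assms] by simp
  also have "\<dots> = Qinv z * (T * Q_slice T z) * Qinv z"
    by (simp add: mult.assoc)
  also have "\<dots> = (Qinv z * Q_slice T z) * T * Qinv z"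
    by (simp add: T_Q_commute mult.assoc)
  also have "\<dots> = T * Qinv z"
    using Qinv_left[OF assms] by simp
  finally show ?thesis by simp
qed

lemma R1_resolvent_equation:
  assumes "1 < cmod z"
  shows "R1 z * l z - T * R1 z = 1"
  using commuting_factor_intertwining[OF T_Qinv_commute[OF assms], of "l (cnj z) - T" "l z"]
    conjugate_pair_intertwining[OF l_cnj_mult[of z] l_cnj_plus[of z], where T = T]
    Qinv_left[OF assms]
  by (simp add: R1_def Q_slice_def)

lemma R2_resolvent_equation:
  assumes "1 < cmod z"
  shows "R2 z * l z - T * R2 z = R1 z"
proof -
  define A where "A = l (cnj z) * l (cnj z) - 2 *\<^sub>R (T * l (cnj z)) + T * T"
  have "T * (Qinv z * Qinv z) = Qinv z * Qinv z * T"
    by (metis T_Qinv_commute[OF assms] mult.assoc)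
  then have "R2 z * l z - T * R2 z = Qinv z * Qinv z * (A * l z - T * A)"
    by (simp add: R2_def A_def l_mult commuting_factor_intertwining)
  also have "A * l z - T * A = Q_slice T z * (l (cnj z) - T)"
    unfolding A_def Q_slice_def
    by (rule conjugate_pair_intertwining_square[OF l_cnj_mult l_cnj_plus])
  also have "Qinv z * Qinv z * (Q_slice T z * (l (cnj z) - T))
      = Qinv z * ((Qinv z * Q_slice T z) * (l (cnj z) - T))"
    by (simp add: mult.assoc)
  finally show ?thesis
    using Qinv_left[OF assms] by (simp add: R1_def)
qed

lemma l_sum_circle_node_power:
  "N > 0 \<Longrightarrow> l (\<Sum>k<N. circle_node r N k ^ m) = (if N dvd m then (real N * r ^ m) *\<^sub>R 1 else 0)"
  using l_of_nat_mult_of_real[of N "r ^ m"] by (simp add: sum_circle_node_power)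

lemma l_circle_node_power_self: "N > 0 \<Longrightarrow> l (circle_node r N k) ^ N = r ^ N *\<^sub>R 1"
  by (metis circle_node_power_self l_power l_of_real)

lemma R1_circle_node_expansion:
  assumes "r > 1" "N > 0"
  shows "(r^N *\<^sub>R 1 - T^N) * R1 (circle_node r N k) = (\<Sum>j<N. T^j * l (circle_node r N k ^ (N-1-j)))"
  using scaled_one_minus_power_mult[OF R1_resolvent_equation l_circle_node_power_self[OF assms(2)]]
    assms by (simp add: l_power)

lemma R2_circle_node_expansion:
  assumes "r > 1" "N > 0"
  shows "(r^N *\<^sub>R 1 - T^N) * (r^N *\<^sub>R 1 - T^N) * R2 (circle_node r N k)
     = (\<Sum>j<N. \<Sum>i<N. T^(j+i) * l (circle_node r N k ^ (2*N-2-j-i)))"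
proof -
  let ?z = "circle_node r N k" and ?D = "r^N *\<^sub>R 1 - T^N"
  have commute: "?D * T^j = T^j * ?D" for j
  proof -
    have "T^N * T^j = T^j * T^N"
      by (metis power_add add.commute)
    then show ?thesis
      by (simp add: algebra_simps)
  qed
  have "?D * R2 ?z = (\<Sum>j<N. T^j * R1 ?z * l (?z ^ (N-1-j)))"
    using scaled_one_minus_power_mult[OF R2_resolvent_equation l_circle_node_power_self[OF assms(2)]]
      assms by (simp add: l_power)
  then have "?D * ?D * R2 ?z = ?D * (\<Sum>j<N. T^j * R1 ?z * l (?z ^ (N-1-j)))"
    by (simp add: mult.assoc)
  also have "\<dots> = (\<Sum>j<N. T^j * (?D * R1 ?z) * l (?z ^ (N-1-j)))"
    by (simp add: sum_distrib_left mult.assoc[symmetric] commute)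
  also have "\<dots> = (\<Sum>j<N. \<Sum>i<N. T^j * (T^i * l (?z ^ (N-1-i))) * l (?z ^ (N-1-j)))"
    using assms by (simp add: R1_circle_node_expansion sum_distrib_left sum_distrib_right)
  also have "\<dots> = (\<Sum>j<N. \<Sum>i<N. T^(j+i) * l (?z ^ (2*N-2-j-i)))"
  proof (intro sum.cong refl)
    fix j i assume "j \<in> {..<N}" "i \<in> {..<N}"
    then have "2*N-2-j-i = (N-1-i) + (N-1-j)"
      by auto
    then show "T^j * (T^i * l (?z ^ (N-1-i))) * l (?z ^ (N-1-j)) = T^(j+i) * l (?z ^ (2*N-2-j-i))"
      by (simp add: power_add l_mult mult.assoc)
  qed
  finally show ?thesis .
qed

lemma sum_R1_circle_nodes:
  assumes "r > 1" "N > 0"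
  shows "(r^N *\<^sub>R 1 - T^N) * (\<Sum>k<N. R1 (circle_node r N k) * l (circle_node r N k)) = (real N * r^N) *\<^sub>R 1"
proof -
  let ?z = "circle_node r N"
  have "(r^N *\<^sub>R 1 - T^N) * (\<Sum>k<N. R1 (?z k) * l (?z k)) = (\<Sum>k<N. \<Sum>j<N. T^j * l (?z k ^ (N-j)))"
  proof -
    have "T^j * l (?z k ^ (N-1-j)) * l (?z k) = T^j * l (?z k ^ (N-j))" if "j < N" for j k
    proof -
      have e: "N - j = Suc (N-1-j)"
        using that by simp
      show ?thesis
        unfolding e by (simp add: l_mult mult.assoc power_Suc2 del: power_Suc)
    qed
    then show ?thesis
      using assms
      by (simp add: sum_distrib_left sum_distrib_right R1_circle_node_expansion flip: mult.assoc)
  qed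
  also have "\<dots> = (\<Sum>j<N. T^j * l (\<Sum>k<N. ?z k ^ (N-j)))"
    by (subst sum.swap) (simp add: l_sum sum_distrib_left)
  also have "\<dots> = (\<Sum>j<N. if j = 0 then (real N * r^N) *\<^sub>R 1 else 0)"
    using assms(2) by (intro sum.cong refl) (auto simp: l_sum_circle_node_power dest: dvd_imp_le)
  also have "\<dots> = (real N * r^N) *\<^sub>R 1"
    using assms(2) by simp
  finally show ?thesis .
qed

lemma sum_R2_circle_nodes:
  assumes "r > 1" "N > 0" "n < N"
  shows "(r^N *\<^sub>R 1 - T^N) * (r^N *\<^sub>R 1 - T^N) * (\<Sum>k<N. R2 (circle_node r N k) * l (circle_node r N k ^ (n+2)))
     = real N *\<^sub>R (real (n+1) *\<^sub>R (r^(2*N) *\<^sub>R T^n) + real (N-1-n) *\<^sub>R (r^N *\<^sub>R T^(n+N)))"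
proof -
  let ?z = "circle_node r N" and ?D = "r^N *\<^sub>R 1 - T^N"
  have "?D * ?D * (\<Sum>k<N. R2 (?z k) * l (?z k ^ (n+2)))
      = (\<Sum>k<N. \<Sum>j<N. \<Sum>i<N. T^(j+i) * l (?z k ^ (2*N+n-j-i)))"
  proof -
    have "T^(j+i) * l (?z k ^ (2*N-2-j-i)) * l (?z k ^ (n+2)) = T^(j+i) * l (?z k ^ (2*N+n-j-i))"
      if "j < N" "i < N" for j i k
    proof -
      have e: "2*N+n-j-i = (2*N-2-j-i) + (n+2)"
        using that by simp
      show ?thesis
        unfolding e power_add l_mult by (simp add: mult.assoc)
    qed
    then show ?thesis
      using assms
      by (simp add: sum_distrib_left sum_distrib_right R2_circle_node_expansion flip: mult.assoc)
  qed
  also have "\<dots> = (\<Sum>j<N. \<Sum>i<N. T^(j+i) * l (\<Sum>k<N. ?z k ^ (2*N+n-j-i)))"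
    by (subst sum.swap, rule sum.cong, simp, subst sum.swap) (simp add: l_sum sum_distrib_left)
  also have "\<dots> = (\<Sum>j<N. \<Sum>i<N. if N dvd (2*N+n-j-i) then (real N * r^(2*N+n-j-i)) *\<^sub>R T^(j+i) else 0)"
    using assms(2) by (intro sum.cong refl) (simp add: l_sum_circle_node_power)
  also have "\<dots> = real (n+1) *\<^sub>R ((real N * r^(2*N)) *\<^sub>R T^n) + real (N-1-n) *\<^sub>R ((real N * r^N) *\<^sub>R T^(n+N))"
    using double_sum_if_dvd[OF assms(3), of "\<lambda>a b. (real N * r^b) *\<^sub>R T^a"] by simp
  finally show ?thesis
    by (simp add: algebra_simps)
qed

text \<open>The \<open>N\<close>-point rule for \<open>(2\<pi>i)\<^sup>-\<^sup>1 \<ointegral> S\<^sub>L\<^sup>-\<^sup>1(s,T) ds = 1\<close> over \<open>|s| = u\<close>.\<close>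

definition resolvent_mean :: "real \<Rightarrow> nat \<Rightarrow> 'r" where
  "resolvent_mean u N = (1 / real N) *\<^sub>R (\<Sum>k<N. R1 (circle_node u N k) * l (circle_node u N k))"

lemma one_minus_power_resolvent_mean:
  assumes "u > 1" "N > 0"
  shows "(1 - (1 / u^N) *\<^sub>R T^N) * resolvent_mean u N = 1"
proof -
  have "1 - (1 / u^N) *\<^sub>R T^N = (1 / u^N) *\<^sub>R (u^N *\<^sub>R 1 - T^N)"
    using assms by (simp add: scaleR_diff_right)
  then show ?thesis
    using assms by (simp add: resolvent_mean_def sum_R1_circle_nodes)
qed

text \<open>The \<open>N\<close>-point rule for \<open>(2\<pi>i)\<^sup>-\<^sup>1 \<ointegral> S\<^sub>L\<^sup>-\<^sup>2(s,T) s\<^sup>n\<^sup>+\<^sup>1 ds = (n+1) T\<^sup>n\<close>, scaled by \<open>N\<close>;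
  the terms with \<open>W\<close> are its aliasing error.\<close>

lemma R2_moment_identity:
  fixes r :: real and N n :: nat
  defines "W \<equiv> (1 / r^N) *\<^sub>R T^N"
    and "S \<equiv> (\<Sum>k<N. R2 (circle_node r N k) * l (circle_node r N k ^ (n+2)))"
  assumes "r > 1" "N > 0" "n < N"
  shows "(1 - W) * (1 - W) * S = (real N * real (n+1)) *\<^sub>R T^n + (real N * real (N-1-n)) *\<^sub>R (W * T^n)"
proof -
  have "r^N *\<^sub>R 1 - T^N = r^N *\<^sub>R (1 - W)"
    using assms(3) by (simp add: W_def scaleR_diff_right)
  moreover have "r^N *\<^sub>R T^(n+N) = r^(2*N) *\<^sub>R (W * T^n)"
    using assms(3) by (simp add: W_def mult_2 power_add flip: power_add[of T n N] add.commute)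
  ultimately have "r^(2*N) *\<^sub>R ((1 - W) * (1 - W) * S)
      = r^(2*N) *\<^sub>R ((real N * real (n+1)) *\<^sub>R T^n + (real N * real (N-1-n)) *\<^sub>R (W * T^n))"
    using sum_R2_circle_nodes[OF assms(3-5)]
    by (simp add: S_def power_mult power2_eq_square mult.commute[of 2] scaleR_add_right mult_ac)
  then show ?thesis
    using assms(3) by simp
qed

lemma continuous_on_Qinv: "continuous_on {z. 1 < cmod z} Qinv"
proof (rule continuous_on_two_sided_inverse)
  show "continuous_on {z. 1 < cmod z} (Q_slice T)"
    unfolding Q_slice_def by (intro continuous_intros)
qed (simp_all add: Qinv_left Qinv_right)

lemma continuous_on_R1_mult_l: "continuous_on {z. 1 < cmod z} (\<lambda>z. R1 z * l z)"
  unfolding R1_def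
  using linear_continuous_on[OF bounded_linear_l]
  by (intro continuous_intros continuous_on_Qinv continuous_on_compose2[of UNIV l _ cnj]) auto

lemma resolvent_mean_bounded:
  assumes "1 < a"
  obtains K where "\<And>u N. u \<in> {a..b} \<Longrightarrow> norm (resolvent_mean u N) \<le> K"
proof -
  define A where "A = {z. a \<le> cmod z \<and> cmod z \<le> b}"
  have "compact A"
    unfolding A_def by (rule compact_annulus)
  moreover have "A \<subseteq> {z. 1 < cmod z}"
    using assms by (auto simp: A_def)
  ultimately have "bounded ((\<lambda>z. R1 z * l z) ` A)"
    by (intro compact_imp_bounded compact_continuous_image continuous_on_subset[OF continuous_on_R1_mult_l])
  then obtain K where K: "K > 0" "\<And>z. z \<in> A \<Longrightarrow> norm (R1 z * l z) \<le> K"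
    by (auto simp: bounded_pos)
  have "norm (resolvent_mean u N) \<le> K" if "u \<in> {a..b}" for u N
    unfolding resolvent_mean_def using that assms K by (intro norm_average_le) (auto simp: A_def)
  then show ?thesis
    using that by blast
qed

lemma resolvent_mean_equicontinuous:
  assumes "1 < a" "\<epsilon> > 0"
  obtains \<delta> where "\<delta> > 0"
    "\<And>u v N. u \<in> {a..b} \<Longrightarrow> v \<in> {a..b} \<Longrightarrow> \<bar>u - v\<bar> < \<delta>
       \<Longrightarrow> norm (resolvent_mean u N - resolvent_mean v N) \<le> \<epsilon>"
proof -
  define A where "A = {z. a \<le> cmod z \<and> cmod z \<le> b}"
  have "A \<subseteq> {z. 1 < cmod z}"
    using assms by (auto simp: A_def)
  then have "uniformly_continuous_on A (\<lambda>z. R1 z * l z)"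
    unfolding A_def
    by (intro compact_uniformly_continuous compact_annulus continuous_on_subset[OF continuous_on_R1_mult_l])
  then obtain \<delta> where \<delta>: "\<delta> > 0"
    "\<And>z w. z \<in> A \<Longrightarrow> w \<in> A \<Longrightarrow> dist z w < \<delta> \<Longrightarrow> dist (R1 z * l z) (R1 w * l w) < \<epsilon>"
    using assms(2) unfolding uniformly_continuous_on_def by metis
  have "norm (resolvent_mean u N - resolvent_mean v N) \<le> \<epsilon>"
    if "u \<in> {a..b}" "v \<in> {a..b}" "\<bar>u - v\<bar> < \<delta>" for u v N
  proof -
    let ?f = "\<lambda>z. R1 z * l z"
    have close: "norm (?f (circle_node u N k) - ?f (circle_node v N k)) \<le> \<epsilon>" for k
    proof -
      have "circle_node u N k \<in> A" "circle_node v N k \<in> A"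
        using that assms(1) by (simp_all add: A_def)
      then show ?thesis
        using \<delta>(2) that(3) by (simp add: dist_circle_nodes less_imp_le flip: dist_norm)
    qed
    have "resolvent_mean u N - resolvent_mean v N
        = (1 / real N) *\<^sub>R (\<Sum>k<N. ?f (circle_node u N k) - ?f (circle_node v N k))"
      by (simp add: resolvent_mean_def sum_subtractf scaleR_diff_right)
    also have "norm \<dots> \<le> \<epsilon>"
      using close assms(2) by (intro norm_average_le) simp_all
    finally show ?thesis .
  qed
  with \<delta>(1) show ?thesis
    using that by blast
qed

lemma resolvent_mean_tendsto_one:
  assumes "\<And>N. norm (T ^ N) \<le> c * g ^ N" "0 < g" "g < t" "1 < t"
  shows "resolvent_mean t \<longlonglongrightarrow> 1"
proof -
  obtain K where K: "\<And>u N. u \<in> {t..t} \<Longrightarrow> norm (resolvent_mean u N) \<le> K"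
    using resolvent_mean_bounded[OF assms(4)] by blast
  show ?thesis
  proof (rule tendsto_one_if_bounded_right_inverse)
    show "\<forall>\<^sub>F N in sequentially. (1 - (1 / t^N) *\<^sub>R T^N) * resolvent_mean t N = 1"
      using eventually_gt_at_top[of 0] by eventually_elim (rule one_minus_power_resolvent_mean[OF assms(4)])
    show "(\<lambda>N. (1 / t^N) *\<^sub>R T^N) \<longlonglongrightarrow> 0"
      using assms(1-3) by (rule scaled_powers_tendsto_zero)
    show "\<forall>\<^sub>F N in sequentially. norm (resolvent_mean t N) \<le> K"
      using K by simp
  qed
qed

lemma scaled_powers_tendsto_zero_at_growth_bound:
  assumes "1 < s" "\<And>t. s < t \<Longrightarrow> \<exists>c. \<forall>N. norm (T ^ N) \<le> c * t ^ N"
  shows "(\<lambda>N. (1 / s^N) *\<^sub>R T^N) \<longlonglongrightarrow> 0"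
proof (rule tendsto_zero_if_right_inverse_tendsto_one)
  show "\<forall>\<^sub>F N in sequentially. (1 - (1 / s^N) *\<^sub>R T^N) * resolvent_mean s N = 1"
    using eventually_gt_at_top[of 0] by eventually_elim (rule one_minus_power_resolvent_mean[OF assms(1)])
  show "resolvent_mean s \<longlonglongrightarrow> 1"
  proof (rule tendsto_if_uniformly_approximable)
    fix \<epsilon> :: real assume "\<epsilon> > 0"
    obtain \<delta> where \<delta>: "\<delta> > 0"
      "\<And>u v N. u \<in> {s..s+1} \<Longrightarrow> v \<in> {s..s+1} \<Longrightarrow> \<bar>u - v\<bar> < \<delta>
         \<Longrightarrow> norm (resolvent_mean u N - resolvent_mean v N) \<le> \<epsilon>"
      using resolvent_mean_equicontinuous[OF assms(1) \<open>\<epsilon> > 0\<close>] by metis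
    define t where "t = s + min (\<delta> / 2) 1"
    have t: "s < t" "t \<le> s + 1" "\<bar>s - t\<bar> < \<delta>"
      using \<delta>(1) by (auto simp: t_def)
    obtain c where "\<And>N. norm (T ^ N) \<le> c * ((s + t) / 2) ^ N"
      using assms(2)[of "(s + t) / 2"] t(1) by auto
    then have "resolvent_mean t \<longlonglongrightarrow> 1"
      by (rule resolvent_mean_tendsto_one) (use t(1) assms(1) in auto)
    moreover have "\<forall>\<^sub>F N in sequentially. dist (resolvent_mean s N) (resolvent_mean t N) \<le> \<epsilon>"
      using \<delta>(2)[of s t] t by (simp add: dist_norm)
    ultimately show "\<exists>g. (g \<longlonglongrightarrow> 1) \<and> (\<forall>\<^sub>F N in sequentially. dist (resolvent_mean s N) (g N) \<le> \<epsilon>)"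
      by blast
  qed
qed

text \<open>The spectral radius of \<open>T\<close> is at most 1. Otherwise the infimum \<open>s > 1\<close> of the admissible
  growth rates would satisfy \<open>T\<^sup>N/s\<^sup>N \<longlonglongrightarrow> 0\<close>, by comparing the resolvent means at \<open>s\<close> with those
  at slightly larger radii, and this yields an admissible rate below \<open>s\<close>.\<close>

lemma power_growth_bound:
  assumes "1 < \<rho>"
  shows "\<exists>c. \<forall>N. norm (T ^ N) \<le> c * \<rho> ^ N"
proof (rule ccontr)
  assume not_\<rho>: "\<not> ?thesis"
  define G where "G = {t. 1 < t \<and> (\<exists>c. \<forall>N. norm (T ^ N) \<le> c * t ^ N)}"
  have G_up: "t' \<in> G" if "t \<in> G" "t \<le> t'" for t t'
    using that norm_power_le_mult_power_mono[of T _ t t'] by (auto simp: G_def)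
  have G_gt: "\<rho> < t" if "t \<in> G" for t
    using G_up[OF that, of \<rho>] not_\<rho> assms by (force simp: G_def)
  have "1 < norm T + 2"
    using norm_ge_zero[of T] by linarith
  then have "norm T + 2 \<in> G"
    using norm_power_le_const_mult_power[of T 1 "norm T + 2"] by (simp add: G_def)
  then have G_ne: "G \<noteq> {}"
    by blast
  have G_bdd: "bdd_below G"
    using G_gt by (meson bdd_belowI less_imp_le)
  define s where "s = Inf G"
  have "\<rho> \<le> s"
    unfolding s_def using G_ne G_gt by (auto intro: cInf_greatest less_imp_le)
  then have "1 < s"
    using assms by simp
  have "t \<in> G" if "s < t" for t
    using that G_ne G_bdd G_up unfolding s_def by (meson cInf_less_iff less_imp_le)
  then have decay: "(\<lambda>N. (1 / s^N) *\<^sub>R T^N) \<longlonglongrightarrow> 0"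
    using \<open>1 < s\<close> by (intro scaled_powers_tendsto_zero_at_growth_bound) (auto simp: G_def)
  obtain t c where "1 < t" "t < s" "\<And>N. norm (T ^ N) \<le> c * t ^ N"
    using smaller_growth_rate_if_scaled_powers_tendsto_zero[OF decay \<open>1 < s\<close>] by blast
  then have "t \<in> G"
    by (auto simp: G_def)
  then show False
    using \<open>t < s\<close> G_bdd unfolding s_def by (meson cInf_lower not_less)
qed

lemma eventually_scaled_power_small:
  assumes "1 < r"
  shows "\<forall>\<^sub>F N in sequentially. real N * norm (T ^ N) \<le> r ^ N / 2"
proof -
  define q where "q = (1 + r) / 2 / r"
  have q: "0 < q" "q < 1"
    using assms by (simp_all add: q_def field_simps)
  obtain c where c: "\<And>N. norm (T ^ N) \<le> c * ((1 + r) / 2) ^ N"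
    using power_growth_bound[of "(1 + r) / 2"] assms by auto
  have "(\<lambda>N. c * (real N * q ^ N)) \<longlonglongrightarrow> 0"
    using q by (intro tendsto_mult_right_zero powser_times_n_limit_0) simp
  then have "\<forall>\<^sub>F N in sequentially. c * (real N * q ^ N) < 1 / 2"
    by (rule order_tendstoD) simp
  then show ?thesis
  proof eventually_elim
    case (elim N)
    have "real N * norm (T ^ N) \<le> real N * (c * ((1 + r) / 2) ^ N)"
      by (intro mult_left_mono c) simp
    also have "\<dots> = c * (real N * q ^ N) * r ^ N"
      using assms by (simp add: q_def power_divide)
    also have "\<dots> \<le> r ^ N / 2"
      using elim assms by (simp add: pos_le_divide_eq)
    finally show ?case .
  qed
qed

lemma R2_bound_nonneg:
  assumes "\<And>z. 1 < cmod z \<Longrightarrow> cmod z \<le> 2 \<Longrightarrow> norm (R2 z) \<le> K / (cmod (z - 1))\<^sup>2"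
  shows "0 \<le> K"
  using assms[of 2] norm_ge_zero[of "R2 2"] by (simp del: norm_ge_zero)

lemma norm_sum_R2_circle_nodes_le:
  assumes R2_le: "\<And>z. 1 < cmod z \<Longrightarrow> cmod z \<le> 2 \<Longrightarrow> norm (R2 z) \<le> K / (cmod (z - 1))\<^sup>2"
    and "1 < r" "r \<le> 2" "N > 0" "3 \<le> r ^ N"
  shows "norm (\<Sum>k<N. R2 (circle_node r N k) * l (circle_node r N k ^ m)) \<le> 2 * K * r ^ m * real N / (r\<^sup>2 - 1)"
proof -
  let ?z = "circle_node r N"
  have "0 \<le> K"
    using R2_le by (rule R2_bound_nonneg)
  have "r\<^sup>2 > 1"
    using assms(2) by (simp add: one_less_power)
  have "norm (\<Sum>k<N. R2 (?z k) * l (?z k ^ m)) \<le> (\<Sum>k<N. K / (cmod (?z k - 1))\<^sup>2 * r ^ m)"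
  proof (intro order_trans[OF norm_sum] sum_mono order_trans[OF norm_mult_ineq] mult_mono)
    fix k
    show "norm (R2 (?z k)) \<le> K / (cmod (?z k - 1))\<^sup>2"
      using assms by (intro R2_le) simp_all
    show "norm (l (?z k ^ m)) \<le> r ^ m"
      using norm_l_le[of "?z k ^ m"] assms(2) by (simp add: norm_power)
  qed (use \<open>0 \<le> K\<close> in simp_all)
  also have "\<dots> = K * r ^ m * (\<Sum>k<N. 1 / (cmod (?z k - 1))\<^sup>2)"
    by (simp add: sum_distrib_left)
  also have "\<dots> = K * r ^ m * (real N * (r ^ N + 1) / ((r ^ N - 1) * (r\<^sup>2 - 1)))"
    by (simp only: sum_inverse_dist_circle_nodes_one[OF assms(2,4)])
  also have "\<dots> \<le> K * r ^ m * (real N * 2 / (r\<^sup>2 - 1))"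
  proof -
    have "(r ^ N + 1) / (r ^ N - 1) \<le> 2"
      using assms(5) by (simp add: divide_simps)
    then have "real N * ((r ^ N + 1) / (r ^ N - 1)) / (r\<^sup>2 - 1) \<le> real N * 2 / (r\<^sup>2 - 1)"
      using \<open>r\<^sup>2 > 1\<close> by (intro divide_right_mono mult_left_mono) auto
    then show ?thesis
      using \<open>0 \<le> K\<close> assms(2) by (intro mult_left_mono) simp_all
  qed
  finally show ?thesis
    by (simp add: mult_ac)
qed

lemma norm_power_le_by_R2_moments:
  assumes R2_le: "\<And>z. 1 < cmod z \<Longrightarrow> cmod z \<le> 2 \<Longrightarrow> norm (R2 z) \<le> K / (cmod (z - 1))\<^sup>2"
    and "1 < r" "r \<le> 2" "n < N" "3 \<le> r ^ N" "real N * norm (T ^ N) \<le> r ^ N / 2"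
  shows "(real n + 1 / 2) * norm (T ^ n) \<le> 8 * K * (r ^ (n + 2) / (r\<^sup>2 - 1))"
proof -
  define W where "W = (1 / r ^ N) *\<^sub>R T ^ N"
  define S where "S = (\<Sum>k<N. R2 (circle_node r N k) * l (circle_node r N k ^ (n + 2)))"
  have NW: "real N * norm W \<le> 1 / 2"
    using assms(2,6) by (simp add: W_def field_simps)
  have "1 \<le> real N"
    using assms(4) by simp
  then have "norm W \<le> real N * norm W"
    using mult_right_mono[of 1 "real N" "norm W"] by simp
  with NW have "norm W \<le> 1"
    by linarith
  moreover have "\<bar>real N * real (N - 1 - n)\<bar> * norm W \<le> real N / 2"
  proof -
    have "\<bar>real N * real (N - 1 - n)\<bar> * norm W \<le> real N * (real N * norm W)"
      by (simp add: mult_left_mono mult_right_mono mult.assoc[symmetric])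
    also have "\<dots> \<le> real N * (1 / 2)"
      using NW by (intro mult_left_mono) simp_all
    finally show ?thesis
      by simp
  qed
  moreover have "(1 - W) * (1 - W) * S
      = (real N * real (n + 1)) *\<^sub>R T ^ n + (real N * real (N - 1 - n)) *\<^sub>R (W * T ^ n)"
    unfolding W_def S_def using assms(4) by (intro R2_moment_identity[OF assms(2)]) simp_all
  ultimately have "(real N * real (n + 1) - real N / 2) * norm (T ^ n) \<le> 4 * norm S"
    by (intro norm_le_of_perturbed_identity[OF norm_one_le])
  also have "\<dots> \<le> 4 * (2 * K * r ^ (n + 2) * real N / (r\<^sup>2 - 1))"
    unfolding S_def using assms(4)
    by (intro mult_left_mono norm_sum_R2_circle_nodes_le[OF R2_le assms(2,3) _ assms(5)]) simp_all
  finally have "real N * ((real n + 1 / 2) * norm (T ^ n)) \<le> real N * (8 * K * (r ^ (n + 2) / (r\<^sup>2 - 1)))"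
    by (simp add: algebra_simps)
  then show ?thesis
    by (rule mult_left_le_imp_le) (use assms(4) in simp)
qed

lemma norm_power_le_if_R2_le:
  assumes R2_le: "\<And>z. 1 < cmod z \<Longrightarrow> cmod z \<le> 2 \<Longrightarrow> norm (R2 z) \<le> K / (cmod (z - 1))\<^sup>2"
    and "1 \<le> n"
  shows "norm (T ^ n) \<le> 24 * K"
proof -
  \<comment> \<open>\<open>r\<^sup>n\<^sup>+\<^sup>2\<close> stays below \<open>e\<close>, while \<open>1/(r\<^sup>2 - 1)\<close> grows only like \<open>(n + 2)/2\<close>.\<close>
  define m where "m = n + 2"
  define r where "r = 1 + 1 / real m"
  have "m > 0"
    by (simp add: m_def)
  then have r: "1 < r" "r \<le> 2" "2 / real m \<le> r\<^sup>2 - 1"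
    by (simp_all add: r_def power2_eq_square field_simps)
  have "r ^ m \<le> 3"
    unfolding r_def by (rule one_plus_inverse_power_le_3)
  obtain N3 where "3 < r ^ N3"
    using real_arch_pow[OF r(1)] by blast
  have "\<forall>\<^sub>F N in sequentially. n < N \<and> 3 \<le> r ^ N \<and> real N * norm (T ^ N) \<le> r ^ N / 2"
    using eventually_gt_at_top[of n] eventually_ge_at_top[of N3] eventually_scaled_power_small[OF r(1)]
  proof eventually_elim
    case (elim N)
    then show ?case
      using \<open>3 < r ^ N3\<close> power_increasing[of N3 N r] r(1) by linarith
  qed
  then obtain N where N: "n < N" "3 \<le> r ^ N" "real N * norm (T ^ N) \<le> r ^ N / 2"
    by (auto simp: eventually_sequentially)
  have "(real n + 1 / 2) * norm (T ^ n) \<le> 8 * K * (r ^ m / (r\<^sup>2 - 1))"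
    unfolding m_def using norm_power_le_by_R2_moments[OF R2_le r(1,2) N] .
  also have "\<dots> \<le> 8 * K * (3 / (2 / real m))"
    using R2_bound_nonneg[OF R2_le] \<open>r ^ m \<le> 3\<close> r \<open>m > 0\<close>
    by (intro mult_left_mono frac_le) simp_all
  also have "\<dots> \<le> (real n + 1 / 2) * (24 * K)"
    using mult_right_mono[of 1 "real n" K] R2_bound_nonneg[OF R2_le] \<open>1 \<le> n\<close>
    by (simp add: m_def algebra_simps)
  finally show ?thesis
    by (simp add: mult_le_cancel_left_pos add_pos_nonneg)
qed

end

section \<open>Quaternionic operators\<close>

definition quat_of_complex :: "complex \<Rightarrow> quat" where
  "quat_of_complex z = Quat (Re z) (Im z) 0 0"

lemma qmult_quat_of_complex: "qmult (quat_of_complex z) (quat_of_complex w) = quat_of_complex (z * w)"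
  by (simp add: quat_of_complex_def qmult_def)

lemma qadd_quat_of_complex: "qadd (quat_of_complex z) (quat_of_complex w) = quat_of_complex (z + w)"
  by (simp add: quat_of_complex_def qadd_def)

lemma qof_real_eq_quat_of_complex: "qof_real c = quat_of_complex (of_real c)"
  by (simp add: quat_of_complex_def qof_real_def)

lemma qcnj_quat_of_complex: "qcnj (quat_of_complex z) = quat_of_complex (cnj z)"
  by (simp add: quat_of_complex_def qcnj_def)

lemma qnorm_quat_of_complex: "qnorm (quat_of_complex z) = cmod z"
  by (simp add: quat_of_complex_def qnorm_def cmod_def)

lemma qRe_quat_of_complex: "qRe (quat_of_complex z) = Re z"
  by (simp add: quat_of_complex_def)

lemma qsub_quat_of_complex_one: "qsub (quat_of_complex z) (qof_real 1) = quat_of_complex (z - 1)"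
  by (simp add: quat_of_complex_def qsub_def qof_real_def)

lemma bounded_linear_left_action:
  assumes "two_sided_qbanach lm rm"
  shows "bounded_linear (lm a)"
proof -
  have lm: "\<And>a b v. lm (qmult a b) v = lm a (lm b v)" "\<And>r v. lm (qof_real r) v = r *\<^sub>R v"
    using assms by (simp_all add: two_sided_qbanach_def)
  have "qmult a (qof_real c) = qmult (qof_real c) a" for c
    by (simp add: qmult_def qof_real_def algebra_simps)
  then have "lm a (c *\<^sub>R v) = c *\<^sub>R lm a v" for c v
    by (metis lm)
  then show ?thesis
    using assms
    by (intro bounded_linear_intro[of _ "qnorm a"]) (simp_all add: two_sided_qbanach_def mult.commute)
qed

context
  fixes lm :: "quat \<Rightarrow> 'x::banach \<Rightarrow> 'x" and rm :: "'x \<Rightarrow> quat \<Rightarrow> 'x" and T :: "'x \<Rightarrow> 'x"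
  assumes X: "two_sided_qbanach lm rm"
    and T: "T \<in> qops rm"
    and outside: "\<forall>s. qnorm s > 1 \<longrightarrow> s \<in> S_resolvent_set rm T"
begin

lemma inv_Qop_two_sided:
  assumes "1 < cmod z"
  shows "bounded_linear (inv (Qop (quat_of_complex z) T))"
    "inv (Qop (quat_of_complex z) T) \<circ> Qop (quat_of_complex z) T = id"
    "Qop (quat_of_complex z) T \<circ> inv (Qop (quat_of_complex z) T) = id"
proof -
  obtain B where B: "B \<in> qops rm" "B \<circ> Qop (quat_of_complex z) T = id" "Qop (quat_of_complex z) T \<circ> B = id"
    using outside[rule_format, of "quat_of_complex z"] assms
    by (auto simp: qnorm_quat_of_complex S_resolvent_set_def qinvertible_def)
  moreover have "inv (Qop (quat_of_complex z) T) = B"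
    using B by (intro inv_unique_comp)
  ultimately show "bounded_linear (inv (Qop (quat_of_complex z) T))"
    "inv (Qop (quat_of_complex z) T) \<circ> Qop (quat_of_complex z) T = id"
    "Qop (quat_of_complex z) T \<circ> inv (Qop (quat_of_complex z) T) = id"
    by (simp_all add: qops_def)
qed

interpretation slice: slice_resolvent "endo_of T" "\<lambda>z. endo_of (lm (quat_of_complex z))"
  "\<lambda>z. endo_of (inv (Qop (quat_of_complex z) T))"
proof -
  have T_bl: "bounded_linear T"
    using T by (simp add: qops_def)
  note apply_simps = endo_apply_endo_of[OF T_bl] endo_apply_endo_of[OF bounded_linear_left_action[OF X]]
  have lm: "\<And>a b v. lm (qmult a b) v = lm a (lm b v)" "\<And>a b v. lm (qadd a b) v = lm a v + lm b v"
    "\<And>r v. lm (qof_real r) v = r *\<^sub>R v" "\<And>a v. norm (lm a v) = qnorm a * norm v"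
    using X by (simp_all add: two_sided_qbanach_def)
  have Q: "endo_apply (Q_slice (endo_of T) z) = Qop (quat_of_complex z) T" for z
    by (simp add: Q_slice_def Qop_def apply_simps qRe_quat_of_complex qnorm_quat_of_complex fun_eq_iff)
  show "slice_resolvent (endo_of T) (\<lambda>z. endo_of (lm (quat_of_complex z)))
      (\<lambda>z. endo_of (inv (Qop (quat_of_complex z) T)))"
  proof
    show "norm (1 :: 'x endo) \<le> 1"
      by (rule norm_one_endo_le)
    show "endo_of (lm (quat_of_complex (z * w)))
        = endo_of (lm (quat_of_complex z)) * endo_of (lm (quat_of_complex w))" for z w
      by (rule endo_apply_inject) (simp add: apply_simps lm(1) fun_eq_iff flip: qmult_quat_of_complex)
    show "endo_of (lm (quat_of_complex (z + w)))
        = endo_of (lm (quat_of_complex z)) + endo_of (lm (quat_of_complex w))" for z w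
      by (rule endo_apply_inject) (simp add: apply_simps lm(2) fun_eq_iff flip: qadd_quat_of_complex)
    show "endo_of (lm (quat_of_complex (of_real c))) = c *\<^sub>R 1" for c
      by (rule endo_apply_inject) (simp add: apply_simps lm(3) fun_eq_iff flip: qof_real_eq_quat_of_complex)
    show "norm (endo_of (lm (quat_of_complex z))) \<le> cmod z" for z
      unfolding norm_endo_eq_onorm apply_simps
      by (rule onorm_bound) (simp_all add: lm(4) qnorm_quat_of_complex)
    show "endo_of (inv (Qop (quat_of_complex z) T)) * Q_slice (endo_of T) z = 1" if "1 < cmod z" for z
      by (rule endo_apply_inject) (simp add: Q endo_apply_endo_of inv_Qop_two_sided[OF that])
    show "Q_slice (endo_of T) z * endo_of (inv (Qop (quat_of_complex z) T)) = 1" if "1 < cmod z" for z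
      by (rule endo_apply_inject) (simp add: Q endo_apply_endo_of inv_Qop_two_sided[OF that])
  qed
qed

lemma norm_slice_R2_eq:
  assumes "1 < cmod z"
  shows "norm (slice.R2 z) = onorm (SL2 lm (quat_of_complex z) T)"
proof -
  have "bounded_linear T"
    using T by (simp add: qops_def)
  then have "endo_apply (slice.R2 z) = SL2 lm (quat_of_complex z) T"
    by (simp add: slice.R2_def SL2_def Let_def endo_apply_endo_of bounded_linear_left_action[OF X]
        inv_Qop_two_sided[OF assms] qcnj_quat_of_complex qmult_quat_of_complex fun_eq_iff)
  then show ?thesis
    by (simp add: norm_endo_eq_onorm)
qed

lemma onorm_power_le_if_SL2_le:
  assumes "0 < C" "0 < \<alpha>" "\<alpha> \<le> 1"
    and est: "\<forall>s. qnorm s > 1 \<longrightarrow> onorm (SL2 lm s T) \<le> C / (qnorm (qsub s (qof_real 1))) powr (1 + \<alpha>)"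
    and "1 \<le> n"
  shows "onorm (T ^^ n) \<le> 72 * C"
proof -
  have "norm (slice.R2 z) \<le> (3 * C) / (cmod (z - 1))\<^sup>2" if "1 < cmod z" "cmod z \<le> 2" for z
  proof -
    have pos: "0 < cmod (z - 1)" and "cmod (z - 1) \<le> 3"
      using that norm_triangle_ineq4[of z 1] by auto
    then have "(cmod (z - 1))\<^sup>2 \<le> 3 * cmod (z - 1) powr (1 + \<alpha>)"
      using assms(2,3) by (intro power2_le_mult_powr) simp_all
    then have "C / cmod (z - 1) powr (1 + \<alpha>) \<le> 3 * C / (cmod (z - 1))\<^sup>2"
      using pos \<open>0 < C\<close> by (simp add: field_simps)
    then show ?thesis
      using est[rule_format, of "quat_of_complex z"] that
      by (simp add: norm_slice_R2_eq qnorm_quat_of_complex qsub_quat_of_complex_one)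
  qed
  then have "norm (endo_of T ^ n) \<le> 24 * (3 * C)"
    using slice.norm_power_le_if_R2_le \<open>1 \<le> n\<close> by blast
  moreover have "bounded_linear T"
    using T by (simp add: qops_def)
  ultimately show ?thesis
    by (simp add: norm_endo_eq_onorm endo_apply_endo_of)
qed

end

theorem theorem3p8:
  fixes lm :: "quat \<Rightarrow> 'x::banach \<Rightarrow> 'x" and rm :: "'x \<Rightarrow> quat \<Rightarrow> 'x"
    and T :: "'x \<Rightarrow> 'x" and C \<alpha> :: real
  assumes X: "two_sided_qbanach lm rm"
    and T: "T \<in> qops rm"
    and bdry: "\<forall>s. qnorm s = 1 \<and> s \<in> S_spectrum rm T \<longrightarrow> s = qof_real 1"
    and outside: "\<forall>s. qnorm s > 1 \<longrightarrow> s \<in> S_resolvent_set rm T"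
    and C: "C > 0" and \<alpha>: "0 < \<alpha>" "\<alpha> \<le> 1"
    and est: "\<forall>s. qnorm s > 1 \<longrightarrow>
               onorm (SL2 lm s T) \<le> C / (qnorm (qsub s (qof_real 1))) powr (1 + \<alpha>)"
  shows "\<exists>M. \<forall>n::nat. n \<ge> 1 \<longrightarrow> onorm (T ^^ n) \<le> M"
  using onorm_power_le_if_SL2_le[OF X T outside C \<alpha> est] by blast

end
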